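(* Let $R>1$ and $f\in H(\mathbb{D}_R)$. Then for any $r$ with $0<r<R$, \[\lim_{q\to1^+}L_q(f;z)=L_1(f;z)\] uniformly on $\{z:|z|\le r\}$.
   Context: $\mathbb{D}_R=\{z\in\mathbb{C}:|z|<R\}$, $H(\mathbb{D}_R)$ the analytic functions on it. For $p>0$, $p\ne1$, $D_pf(z)=\frac{f(pz)-f(z)}{(p-1)z}$ for $z\ne0$ and $D_pf(0)=f'(0)$. For $q>1$ and $|z|<R/q^2$, $L_q(f;z)=\frac{(1-z)\,q\,(D_qf(z)-D_{q^{-1}}f(z))}{q-1}$ (for any fixed $z$ this is defined for all $q>1$ close enough to $1$), and $L_1(f;z)=f''(z)\,z(1-z)$. *)

theory Defs
  imports "HOL-Complex_Analysis.Complex_Analysis"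
begin

definition Dq :: "(complex \<Rightarrow> complex) \<Rightarrow> real \<Rightarrow> complex \<Rightarrow> complex" where
  "Dq f p z = (if z = 0 then deriv f 0
               else (f (complex_of_real p * z) - f z) / ((complex_of_real p - 1) * z))"

definition Lq :: "(complex \<Rightarrow> complex) \<Rightarrow> real \<Rightarrow> complex \<Rightarrow> complex" where
  "Lq f q z = (1 - z) * complex_of_real q * (Dq f q z - Dq f (1 / q) z) / (complex_of_real q - 1)"

definition L1 :: "(complex \<Rightarrow> complex) \<Rightarrow> complex \<Rightarrow> complex" where
  "L1 f z = deriv (deriv f) z * z * (1 - z)"

end

theory Submission
  imports Defs
begin

text \<open>
  Write h = (q - 1) z, so that q z = z + h and z / q = z - h / q. Expanding f to second order
  at z, the difference D_q f(z) - D_{1/q} f(z) becomes f''(z) h (1 + 1/q) / 2 plus the two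
  third-order Taylor remainders divided by h. After multiplication by (1 - z) q / (q - 1) the main
  term differs from L_1(f; z) by (1 - z) f''(z) h / 2, and the remainders contribute
  O(|h|^3 / ((q - 1) |h|)) = O((q - 1) |z|^2). Both are O(q - 1) uniformly for |z| <= r, since
  f'' and f''' are bounded on a closed disc of radius \<rho> in (r, R), which contains q z as soon
  as q r <= \<rho>.
\<close>

definition taylor2_rem :: "(complex \<Rightarrow> complex) \<Rightarrow> complex \<Rightarrow> complex \<Rightarrow> complex" where
  "taylor2_rem f w h = f (w + h) - (f w + deriv f w * h + deriv (deriv f) w * h\<^sup>2 / 2)"

lemma norm_taylor2_rem_le:
  assumes "f holomorphic_on A" and "open A" and "convex S" and "S \<subseteq> A"
    and B: "\<And>x. x \<in> S \<Longrightarrow> norm ((deriv ^^ 3) f x) \<le> B"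
    and "w \<in> S" and "w + h \<in> S"
  shows "norm (taylor2_rem f w h) \<le> B * norm h ^ 3 / 2"
proof -
  have "((deriv ^^ i) f has_field_derivative (deriv ^^ Suc i) f x) (at x within S)" if "x \<in> S" for i x
    using holomorphic_derivI[OF holomorphic_higher_deriv[OF assms(1,2)] assms(2)] that assms(4)
    by (auto intro: has_field_derivative_at_within)
  then have "norm ((deriv ^^ 0) f (w + h) - (\<Sum>i\<le>2. (deriv ^^ i) f w * (w + h - w) ^ i / fact i))
      \<le> B * norm (w + h - w) ^ Suc 2 / fact 2"
    using assms(3,6,7) B by (intro complex_Taylor) (auto simp: numeral_3_eq_3)
  then show ?thesis
    by (simp add: taylor2_rem_def numeral_2_eq_2 algebra_simps power3_eq_cube)
qed

lemma Dq_eq_taylor2: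
  assumes "p \<noteq> 1" and "z \<noteq> 0"
  defines "h \<equiv> (of_real p - 1) * z"
  shows "Dq f p z = deriv f z + deriv (deriv f) z * h / 2 + taylor2_rem f z h / h"
proof -
  have "h \<noteq> 0" using assms by (simp add: h_def)
  moreover have "of_real p * z = z + h" by (simp add: h_def algebra_simps)
  ultimately show ?thesis
    using assms(2) by (simp add: Dq_def taylor2_rem_def h_def[symmetric] field_simps power2_eq_square)
qed

lemma Lq_minus_L1_eq:
  assumes "q > 1" and "z \<noteq> 0"
  defines "Q \<equiv> complex_of_real q"
  defines "h \<equiv> (Q - 1) * z"
  shows "Lq f q z - L1 f z = (1 - z) * (deriv (deriv f) z * h / 2
           + Q * (taylor2_rem f z h + Q * taylor2_rem f z (- h / Q)) / ((Q - 1) * h))"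
proof -
  have Q: "Q \<noteq> 0" "Q - 1 \<noteq> 0" using assms(1) by (auto simp: Q_def)
  have h0: "h \<noteq> 0" using Q assms(2) by (simp add: h_def)
  have h': "(of_real (1 / q) - 1) * z = - h / Q"
    using Q by (simp add: Q_def h_def field_simps)
  have D1: "Dq f q z = deriv f z + deriv (deriv f) z * h / 2 + taylor2_rem f z h / h"
    using Dq_eq_taylor2[of q z f] assms(1,2) by (simp add: Q_def h_def)
  have D2: "Dq f (1 / q) z = deriv f z - deriv (deriv f) z * h / Q / 2 - Q * taylor2_rem f z (- h / Q) / h"
  proof -
    have "1 / q \<noteq> 1" using assms(1) by simp
    from Dq_eq_taylor2[OF this assms(2), of f, unfolded h'] show ?thesis
      using Q h0 by (simp add: field_simps)
  qed
  define S where "S = taylor2_rem f z h + Q * taylor2_rem f z (- h / Q)"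
  define A where "A = deriv (deriv f) z * h * (1 + 1 / Q) / 2"
  have "Dq f q z - Dq f (1 / q) z = A + S / h"
    unfolding D1 D2 S_def A_def using Q h0 by (simp add: field_simps)
  then have "Lq f q z = (1 - z) * Q * (A + S / h) / (Q - 1)"
    by (simp add: Lq_def Q_def)
  then have "Lq f q z - L1 f z = (1 - z) * (Q * A / (Q - 1) - deriv (deriv f) z * z + Q * S / ((Q - 1) * h))"
    by (simp add: L1_def algebra_simps add_divide_distrib diff_divide_distrib)
  also have "Q * A / (Q - 1) - deriv (deriv f) z * z = deriv (deriv f) z * h / 2"
    using Q by (simp add: A_def h_def field_simps)
  finally show ?thesis by (simp add: S_def)
qed

lemma norm_Lq_remainder_le:
  fixes q B :: real and z R1 R2 :: complex
  assumes q: "1 < q" "q \<le> 2" and "0 \<le> B" and "z \<noteq> 0"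
  defines "Q \<equiv> complex_of_real q"
  defines "h \<equiv> (Q - 1) * z"
  assumes R1: "norm R1 \<le> B * norm h ^ 3 / 2" and R2: "norm R2 \<le> B * norm (h / Q) ^ 3 / 2"
  shows "norm (Q * (R1 + Q * R2) / ((Q - 1) * h)) \<le> (q - 1) * (3 * B * norm z ^ 2 / 2)"
proof -
  have "Q - 1 = complex_of_real (q - 1)" by (simp add: Q_def)
  then have nQ: "norm Q = q" and nQ1: "norm (Q - 1) = q - 1"
    using q by (simp_all add: Q_def del: of_real_diff)
  have nh: "norm h = (q - 1) * norm z"
    by (simp add: h_def norm_mult nQ1)
  have "q\<^sup>2 * norm R2 \<le> q\<^sup>2 * (B * (norm h / q) ^ 3 / 2)"
    using R2 q by (simp add: norm_divide nQ)
  also have "\<dots> = (B * norm h ^ 3 / 2) / q"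
    using q by (simp add: power_divide power2_eq_square power3_eq_cube)
  also have "\<dots> \<le> B * norm h ^ 3 / 2"
    using divide_left_mono[of 1 q "B * norm h ^ 3 / 2"] q \<open>0 \<le> B\<close> by simp
  finally have R2': "q\<^sup>2 * norm R2 \<le> B * norm h ^ 3 / 2" .
  have "norm (Q * (R1 + Q * R2)) \<le> q * (norm R1 + q * norm R2)"
    using q norm_triangle_ineq[of R1 "Q * R2"] by (simp add: norm_mult nQ)
  also have "\<dots> = q * norm R1 + q\<^sup>2 * norm R2"
    by (simp add: algebra_simps power2_eq_square)
  also have "\<dots> \<le> q * (B * norm h ^ 3 / 2) + B * norm h ^ 3 / 2"
    using R1 R2' q by (intro add_mono mult_left_mono) auto
  also have "\<dots> \<le> 3 * (B * norm h ^ 3 / 2)"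
    using mult_right_mono[OF q(2), of "B * norm h ^ 3 / 2"] \<open>0 \<le> B\<close> by simp
  finally have "norm (Q * (R1 + Q * R2)) / ((q - 1) * norm h) \<le> 3 * (B * norm h ^ 3 / 2) / ((q - 1) * norm h)"
    using q by (intro divide_right_mono) auto
  also have "\<dots> = (q - 1) * (3 * B * norm z ^ 2 / 2)"
  proof -
    have "3 * (B * (d * n) ^ 3 / 2) / (d * (d * n)) = d * (3 * B * n\<^sup>2 / 2)"
      if "d \<noteq> 0" "n \<noteq> 0" for d n :: real
      using that by (simp add: field_simps power2_eq_square power3_eq_cube)
    from this[of "q - 1" "norm z"] show ?thesis using q \<open>z \<noteq> 0\<close> by (simp add: nh)
  qed
  finally show ?thesis
    by (simp add: norm_divide norm_mult nQ1)
qed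

lemma norm_Lq_minus_L1_le:
  assumes hol: "f holomorphic_on A" "open A" "cball 0 \<rho> \<subseteq> A"
    and B2: "\<And>x. x \<in> cball 0 \<rho> \<Longrightarrow> norm (deriv (deriv f) x) \<le> B2"
    and B3: "\<And>x. x \<in> cball 0 \<rho> \<Longrightarrow> norm ((deriv ^^ 3) f x) \<le> B3"
    and q: "1 < q" "q \<le> 2" and z: "q * norm z \<le> \<rho>"
  shows "norm (Lq f q z - L1 f z) \<le> (q - 1) * norm (1 - z) * (B2 * norm z / 2 + 3 * B3 * norm z ^ 2 / 2)"
proof (cases "z = 0")
  case True
  then show ?thesis by (simp add: Lq_def L1_def Dq_def)
next
  case False
  define Q where "Q = complex_of_real q"
  define h where "h = (Q - 1) * z"
  have "Q - 1 = complex_of_real (q - 1)" by (simp add: Q_def)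
  then have nQ: "norm Q = q" and nh: "norm h = (q - 1) * norm z"
    using q by (simp_all add: Q_def h_def norm_mult del: of_real_diff)
  have "norm z \<le> q * norm z" using q by (simp add: mult_le_cancel_right1)
  then have z_in: "z \<in> cball 0 \<rho>" using z by simp
  have "z + h = Q * z" by (simp add: h_def algebra_simps)
  then have zh_in: "z + h \<in> cball 0 \<rho>" using z by (simp add: norm_mult nQ)
  have "z + - h / Q = z / Q" using q by (simp add: h_def Q_def field_simps)
  moreover have "norm (z / Q) \<le> norm z"
    using q by (simp add: norm_divide nQ field_simps mult_le_cancel_right1)
  ultimately have zhQ_in: "z + - h / Q \<in> cball 0 \<rho>" using z_in by simp
  have B3_nonneg: "0 \<le> B3" using B3[OF z_in] by (rule order_trans[OF norm_ge_zero])
  have taylor: "norm (taylor2_rem f z k) \<le> B3 * norm k ^ 3 / 2" if "z + k \<in> cball 0 \<rho>" for k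
    using hol(1,2) convex_cball hol(3) B3 z_in that by (rule norm_taylor2_rem_le)
  have rem: "norm (Q * (taylor2_rem f z h + Q * taylor2_rem f z (- h / Q)) / ((Q - 1) * h))
      \<le> (q - 1) * (3 * B3 * norm z ^ 2 / 2)"
    using norm_Lq_remainder_le[OF q B3_nonneg False] taylor[OF zh_in] taylor[OF zhQ_in]
    by (simp add: Q_def h_def)
  have main: "norm (deriv (deriv f) z * h / 2) \<le> (q - 1) * (B2 * norm z / 2)"
    using B2[OF z_in] q by (simp add: norm_mult nh mult_right_mono mult_left_mono)
  have "norm (Lq f q z - L1 f z)
      \<le> norm (1 - z) * ((q - 1) * (B2 * norm z / 2) + (q - 1) * (3 * B3 * norm z ^ 2 / 2))"
    unfolding Lq_minus_L1_eq[OF q(1) False, of f, folded Q_def, folded h_def] norm_mult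
    by (intro mult_left_mono norm_triangle_le add_mono main rem) simp
  also have "\<dots> = (q - 1) * norm (1 - z) * (B2 * norm z / 2 + 3 * B3 * norm z ^ 2 / 2)"
    by (simp add: field_simps)
  finally show ?thesis .
qed

lemma norm_Lq_minus_L1_le_on_cball:
  assumes hol: "f holomorphic_on A" "open A" "cball 0 \<rho> \<subseteq> A"
    and B2: "\<And>x. x \<in> cball 0 \<rho> \<Longrightarrow> norm (deriv (deriv f) x) \<le> B2"
    and B3: "\<And>x. x \<in> cball 0 \<rho> \<Longrightarrow> norm ((deriv ^^ 3) f x) \<le> B3"
    and q: "1 < q" "q \<le> 2" "q * r \<le> \<rho>" and z: "z \<in> cball 0 r"
  shows "dist (Lq f q z) (L1 f z) \<le> (q - 1) * ((1 + r) * (B2 * r / 2 + 3 * B3 * r\<^sup>2 / 2))"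
proof -
  have "norm z \<le> r" using z by simp
  then have "q * norm z \<le> q * r" using q by (intro mult_left_mono) auto
  then have qz: "q * norm z \<le> \<rho>" using q by linarith
  have "0 \<le> r" using \<open>norm z \<le> r\<close> norm_ge_zero[of z] by linarith
  then have "0 \<le> q * r" using q by simp
  then have "0 \<in> cball 0 \<rho>" using q by simp
  then have "0 \<le> B2" and "0 \<le> B3"
    using B2 B3 norm_ge_zero by (blast intro: order_trans)+
  have "dist (Lq f q z) (L1 f z) \<le> (q - 1) * norm (1 - z) * (B2 * norm z / 2 + 3 * B3 * norm z ^ 2 / 2)"
    unfolding dist_norm using q qz by (intro norm_Lq_minus_L1_le[OF hol B2 B3])
  also have "\<dots> \<le> (q - 1) * ((1 + r) * (B2 * r / 2 + 3 * B3 * r\<^sup>2 / 2))"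
  proof -
    have "norm (1 - z) \<le> 1 + r" using norm_triangle_ineq4[of 1 z] \<open>norm z \<le> r\<close> by simp
    moreover have "B2 * norm z / 2 + 3 * B3 * norm z ^ 2 / 2 \<le> B2 * r / 2 + 3 * B3 * r\<^sup>2 / 2"
      using \<open>norm z \<le> r\<close> \<open>0 \<le> B2\<close> \<open>0 \<le> B3\<close>
      by (intro add_mono divide_right_mono mult_left_mono power_mono) auto
    ultimately show ?thesis
      using q \<open>0 \<le> B2\<close> \<open>0 \<le> B3\<close> \<open>0 \<le> r\<close> by (simp add: mult.assoc mult_mono)
  qed
  finally show ?thesis .
qed

lemma holomorphic_higher_deriv_bounded:
  assumes "f holomorphic_on A" and "open A" and "compact K" and "K \<subseteq> A"
  obtains B where "\<And>x. x \<in> K \<Longrightarrow> norm ((deriv ^^ n) f x) \<le> B"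
proof -
  have "continuous_on K ((deriv ^^ n) f)"
    using holomorphic_higher_deriv[OF assms(1,2)] assms(4)
    by (meson holomorphic_on_imp_continuous_on holomorphic_on_subset)
  with assms(3) show ?thesis
    using that by (metis continuous_on_compact_bound)
qed

lemma uniform_limit_at_right_linear_bound:
  fixes a C :: real
  assumes "\<forall>\<^sub>F q in at_right a. \<forall>z\<in>S. dist (F q z) (G z) \<le> (q - a) * C"
  shows "uniform_limit S F G (at_right a)"
proof (rule uniform_limitI)
  fix e :: real
  assume "0 < e"
  have "((\<lambda>q. (q - a) * C) \<longlongrightarrow> (a - a) * C) (at_right a)"
    by (intro tendsto_intros)
  then have "\<forall>\<^sub>F q in at_right a. (q - a) * C < e"
    using \<open>0 < e\<close> by (intro order_tendstoD(2)) auto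
  with assms show "\<forall>\<^sub>F q in at_right a. \<forall>z\<in>S. dist (F q z) (G z) < e"
    by eventually_elim (auto intro: le_less_trans)
qed

theorem mainTheorem4:
  fixes f :: "complex \<Rightarrow> complex" and R r :: real
  assumes "R > 1" and "f holomorphic_on ball 0 R" and "0 < r" and "r < R"
  shows "uniform_limit (cball 0 r) (\<lambda>q z. Lq f q z) (\<lambda>z. L1 f z) (at_right 1)"
proof -
  define \<rho> where "\<rho> = (r + R) / 2"
  have "r < \<rho>" and sub: "cball 0 \<rho> \<subseteq> ball 0 R" using assms by (auto simp: \<rho>_def)
  note bounded = holomorphic_higher_deriv_bounded[OF assms(2) open_ball compact_cball sub]
  obtain B2 where B2: "\<And>x. x \<in> cball 0 \<rho> \<Longrightarrow> norm (deriv (deriv f) x) \<le> B2"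
    using bounded[of 2] by (auto simp: numeral_2_eq_2)
  obtain B3 where B3: "\<And>x. x \<in> cball 0 \<rho> \<Longrightarrow> norm ((deriv ^^ 3) f x) \<le> B3"
    using bounded[of 3] by auto
  have "\<forall>\<^sub>F q in at_right 1. q * r < \<rho>"
    using \<open>r < \<rho>\<close> by (intro order_tendstoD(2) tendsto_eq_intros) auto
  moreover have "\<forall>\<^sub>F q in at_right (1::real). q < 2"
    by (intro order_tendstoD(2)[OF tendsto_ident_at]) auto
  ultimately have "\<forall>\<^sub>F q in at_right 1. \<forall>z\<in>cball 0 r.
      dist (Lq f q z) (L1 f z) \<le> (q - 1) * ((1 + r) * (B2 * r / 2 + 3 * B3 * r\<^sup>2 / 2))"
    using eventually_at_right_less[of 1]
    by eventually_elim (auto intro: norm_Lq_minus_L1_le_on_cball[OF assms(2) open_ball sub B2 B3])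
  then show ?thesis by (rule uniform_limit_at_right_linear_bound)
qed

end
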